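(* Fix a target trajectory $\bm{p}_O:[0,\infty)\to\mathbb{R}^3$ (continuously differentiable) and an end-effector trajectory $\bm{p}_E:[0,\infty)\to\mathbb{R}^3$ obeying $$\dot{\bm{p}}_E(t)=\dot{\bm{p}}_{E,d}(t)+\bm{\Delta}(t),$$ where $\bm{\Delta}$ is an unknown term satisfying $\|\bm{\Delta}(t)\|\le\delta_E$ for all $t\ge0$, for some constant $\delta_E>0$. Let $\bm{e}_E=\bm{p}_E-\bm{p}_O=[e_{E,x},e_{E,y},e_{E,z}]^T$. Let $\bm{\Lambda}$ and $\bm{K}$ be positive diagonal $3\times3$ matrices and set $$\delta_{\bm z}=\frac{(\lambda_{\min}(\bm\Lambda)+\lambda_{\max}(\bm\Lambda))\,\delta_E}{\lambda_{\min}(\bm\Lambda)\,\lambda_{\min}(\bm K)}.$$ For each $\nu\in\{x,y,z\}$ let $\rho_\nu(t)=(\rho_{\nu,0}-\rho_{\nu,\infty})e^{-l_E t}+\rho_{\nu,\infty}$ with constants $l_E>0$, $\rho_{\nu,\infty}>0$ and $\rho_{\nu,0}>|e_{E,\nu}(0)|$, and assume $\bm K$ is chosen so that $\delta_{\bm z}<\min\{\rho_{\nu,\infty},\ \rho_{\nu,0}-|e_{E,\nu}(0)|\}$ for every $\nu$. Let $b_\nu=l_E e_{E,\nu}(0)+\dot e_{E,\nu}(0)$ and choose $c_\nu>0$ with $c_\nu>|b_\nu|/(\rho_{\nu,0}-\delta_{\bm z}-|e_{E,\nu}(0)|)$. Define the preset trajectory $\bm\alpha(t)=[\alpha_x(t),\alpha_y(t),\alpha_z(t)]^T$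 by $$\alpha_\nu(t)=\frac{b_\nu}{c_\nu}(1-e^{-c_\nu t})e^{-l_E t}+e_{E,\nu}(0)e^{-l_E t},$$ and set $\bm z=\bm e_E-\bm\alpha(t)$, $\bm s=\bm z+\bm\Lambda\int_0^t\bm z\,d\tau$. If the desired end-effector velocity is given by the control law $$\dot{\bm p}_{E,d}=\dot{\bm p}_O+\dot{\bm\alpha}-\bm\Lambda\bm z-\bm K\bm s,$$ then the tracking error $\bm e_E$ is bounded and $|e_{E,\nu}(t)|<\rho_\nu(t)$ for all $t\ge0$ and all $\nu\in\{x,y,z\}$.
   Context: This is a kinematic tracking-control setting for the end-effector of an aerial manipulator: $\bm p_E$ is the end-effector position, $\bm p_O$ the target position, $\dot{\bm p}_{E,d}$ the commanded end-effector velocity, and $\bm\Delta$ the (bounded) mismatch between commanded and realized velocity. $\rho_\nu$ is the performance-envelope boundary function for coordinate $\nu$; $\dot e_{E,\nu}(0)$ is the initial rate of the tracking error. $\lambda_{\min},\lambda_{\max}$ denote minimum and maximum eigenvalues. *)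

theory Defs
  imports "HOL-Analysis.Analysis"
begin

definition eigvals :: "real^'n^'n \<Rightarrow> real set" where
  "eigvals A = {\<mu>. \<exists>v. v \<noteq> 0 \<and> A *v v = \<mu> *\<^sub>R v}"

definition lambda_min :: "real^'n^'n \<Rightarrow> real" where
  "lambda_min A = Min (eigvals A)"

definition lambda_max :: "real^'n^'n \<Rightarrow> real" where
  "lambda_max A = Max (eigvals A)"

definition pos_diag :: "real^'n^'n \<Rightarrow> bool" where
  "pos_diag A \<longleftrightarrow> (\<forall>i j. i \<noteq> j \<longrightarrow> A $ i $ j = 0) \<and> (\<forall>i. A $ i $ i > 0)"

end

theory Submission
  imports Defs
begin

(* In each coordinate nu, with l = Lam$nu$nu and k = K$nu$nu, the control law turns the error
   dynamics into z' = Delta - l z - k s, where s = z + l w and w is the integral of z.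
   Hence s' = -k s + Delta, so |s| <= deltaE / k, and w' = -l w + s gives l |w| < deltaE / k;
   therefore |z| = |s - l w| < 2 deltaE / k <= deltaz.  The preset trajectory alpha starts at
   e(0), so z(0) = 0, and |alpha(t)| <= (|b| / c + |e(0)|) exp(-lE t) < (rho0 - deltaz) exp(-lE t).
   Together with deltaz < rhoinf this keeps e = z + alpha strictly inside the envelope rho. *)

lemma has_vector_derivative_vec_nth:
  fixes f :: "real \<Rightarrow> real^'n"
  assumes "(f has_vector_derivative f') F"
  shows "((\<lambda>x. f x $ i) has_real_derivative f' $ i) F"
  using bounded_linear.has_vector_derivative[OF bounded_linear_vec_nth assms]
  by (simp add: has_real_derivative_iff_has_vector_derivative)

lemma has_vector_derivative_vec_lambda:
  fixes f :: "'n::finite \<Rightarrow> real \<Rightarrow> real"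
  assumes "\<And>i. (f i has_real_derivative f' i) (at t within S)"
  shows "((\<lambda>t. \<chi> i. f i t) has_vector_derivative (\<chi> i. f' i)) (at t within S)"
proof -
  have "(\<lambda>h. h * c) = (*) c" for c :: real by auto
  then have "\<forall>b\<in>Basis. ((\<lambda>t. (\<chi> i. f i t) \<bullet> b) has_derivative (\<lambda>h. (h *\<^sub>R (\<chi> i. f' i)) \<bullet> b))
      (at t within S)"
    using assms by (auto simp: Basis_vec_def inner_axis has_field_derivative_def)
  then show ?thesis
    unfolding has_vector_derivative_def by (subst has_derivative_componentwise_within)
qed

lemma DERIV_within_nonpos_imp_decreasing:
  fixes f :: "real \<Rightarrow> real"
  assumes "a \<le> b"
    and deriv: "\<And>x. x \<in> {a..b} \<Longrightarrow> (f has_real_derivative f' x) (at x within {a..b})"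
    and nonpos: "\<And>x. x \<in> {a..b} \<Longrightarrow> f' x \<le> 0"
  shows "f b \<le> f a"
proof (rule DERIV_nonpos_imp_decreasing_open[OF \<open>a \<le> b\<close>])
  show "continuous_on {a..b} f" using deriv by (rule DERIV_continuous_on)
  fix x assume "a < x" "x < b"
  then show "\<exists>y. (f has_real_derivative y) (at x) \<and> y \<le> 0"
    using deriv[of x] nonpos[of x] at_within_Icc_at[of a x b] by auto
qed

lemma mult_exp_decay_le_abs:
  fixes a l t :: real
  assumes "0 \<le> l" "0 \<le> t"
  shows "a * exp (- l * t) \<le> \<bar>a\<bar>"
proof -
  have "a * exp (- l * t) \<le> \<bar>a\<bar> * exp (- l * t)"
    by (rule mult_right_mono) auto
  also have "\<dots> \<le> \<bar>a\<bar>"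
    using assms by (simp add: mult_left_le)
  finally show ?thesis .
qed

lemma bounded_image_if_abs_components_le:
  fixes f :: "'a \<Rightarrow> real^'n"
  assumes "\<And>x i. x \<in> S \<Longrightarrow> \<bar>f x $ i\<bar> \<le> B i"
  shows "bounded (f ` S)"
proof -
  have "f ` S \<subseteq> cbox (- (\<chi> i. B i)) (\<chi> i. B i)"
    using assms by (auto simp: mem_box_cart abs_le_iff minus_le_iff)
  then show ?thesis
    using bounded_subset[OF bounded_cbox] by blast
qed

lemma diag_matrix_vector_mult_nth:
  fixes A :: "'a::semiring_1^'n^'n"
  assumes "\<forall>i j. i \<noteq> j \<longrightarrow> A $ i $ j = 0"
  shows "(A *v x) $ i = A $ i $ i * x $ i"
proof -
  have "(A *v x) $ i = (\<Sum>j\<in>UNIV. A $ i $ j * x $ j)"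
    by (simp add: matrix_vector_mult_def)
  also have "\<dots> = (\<Sum>j\<in>UNIV. if j = i then A $ i $ i * x $ i else 0)"
    by (rule sum.cong) (auto simp: assms)
  finally show ?thesis by simp
qed

lemma eigvals_diag:
  fixes A :: "real^'n^'n"
  assumes diag: "\<forall>i j. i \<noteq> j \<longrightarrow> A $ i $ j = 0"
  shows "eigvals A = range (\<lambda>i. A $ i $ i)"
proof
  show "eigvals A \<subseteq> range (\<lambda>i. A $ i $ i)"
  proof
    fix \<mu> assume "\<mu> \<in> eigvals A"
    then obtain v where "v \<noteq> 0" and v: "A *v v = \<mu> *\<^sub>R v" by (auto simp: eigvals_def)
    then obtain i where "v $ i \<noteq> 0" by (auto simp: vec_eq_iff)
    moreover have "A $ i $ i * v $ i = \<mu> * v $ i"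
      using arg_cong[OF v, of "\<lambda>w. w $ i"] by (simp add: diag_matrix_vector_mult_nth[OF diag])
    ultimately show "\<mu> \<in> range (\<lambda>i. A $ i $ i)" by auto
  qed
  show "range (\<lambda>i. A $ i $ i) \<subseteq> eigvals A"
  proof clarify
    fix i
    have "A *v axis i 1 = A $ i $ i *\<^sub>R axis i 1"
      by (simp add: vec_eq_iff diag_matrix_vector_mult_nth[OF diag] axis_def)
    moreover have "axis i (1::real) \<noteq> 0" by (simp add: axis_eq_0_iff)
    ultimately show "A $ i $ i \<in> eigvals A"
      unfolding eigvals_def by blast
  qed
qed

lemma lambda_min_le_diag:
  assumes "\<forall>i j. i \<noteq> j \<longrightarrow> A $ i $ j = 0"
  shows "lambda_min A \<le> A $ i $ i"
  by (simp add: lambda_min_def eigvals_diag[OF assms])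

lemma diag_le_lambda_max:
  assumes "\<forall>i j. i \<noteq> j \<longrightarrow> A $ i $ j = 0"
  shows "A $ i $ i \<le> lambda_max A"
  by (simp add: lambda_max_def eigvals_diag[OF assms])

lemma lambda_min_pos:
  assumes "pos_diag A"
  shows "0 < lambda_min A"
proof -
  have "lambda_min A \<in> range (\<lambda>i. A $ i $ i)"
    using assms unfolding lambda_min_def pos_diag_def
    by (subst eigvals_diag) (auto intro: Min_in)
  then show ?thesis using assms unfolding pos_diag_def by auto
qed

lemma twice_div_diag_le_eigenvalue_quotient:
  assumes \<Lambda>: "pos_diag \<Lambda>" and K: "pos_diag K" and "0 \<le> \<delta>"
  shows "2 * \<delta> / K $ i $ i \<le> (lambda_min \<Lambda> + lambda_max \<Lambda>) * \<delta> / (lambda_min \<Lambda> * lambda_min K)"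
proof -
  have "lambda_min \<Lambda> \<le> lambda_max \<Lambda>"
    using \<Lambda> lambda_min_le_diag diag_le_lambda_max order_trans unfolding pos_diag_def by blast
  then have "2 \<le> (lambda_min \<Lambda> + lambda_max \<Lambda>) / lambda_min \<Lambda>"
    using lambda_min_pos[OF \<Lambda>] by (simp add: field_simps)
  moreover have "\<delta> / K $ i $ i \<le> \<delta> / lambda_min K"
  proof (rule divide_left_mono[OF _ \<open>0 \<le> \<delta>\<close>])
    show "lambda_min K \<le> K $ i $ i"
      using K lambda_min_le_diag unfolding pos_diag_def by blast
    show "0 < K $ i $ i * lambda_min K"
      using K lambda_min_pos[OF K] unfolding pos_diag_def by simp
  qed
  moreover have "0 \<le> \<delta> / K $ i $ i"
    using \<open>0 \<le> \<delta>\<close> K unfolding pos_diag_def by (simp add: less_imp_le)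
  ultimately have "2 * (\<delta> / K $ i $ i)
      \<le> (lambda_min \<Lambda> + lambda_max \<Lambda>) / lambda_min \<Lambda> * (\<delta> / lambda_min K)"
    by (intro mult_mono) auto
  then show ?thesis by simp
qed

lemma linear_ode_comparison:
  fixes F G :: "real \<Rightarrow> real"
  assumes "0 \<le> t" "0 < a" "F 0 = 0"
    and deriv: "\<And>x. x \<in> {0..t} \<Longrightarrow> (F has_real_derivative - a * F x + G x) (at x within {0..t})"
    and bound: "\<And>x. x \<in> {0..t} \<Longrightarrow> G x \<le> m"
  shows "a * F t \<le> m * (1 - exp (- a * t))"
proof -
  define g where "g u = exp (a * u) * (a * F u - m)" for u
  have "g t \<le> g 0"
  proof (rule DERIV_within_nonpos_imp_decreasing[OF \<open>0 \<le> t\<close>])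
    fix x assume x: "x \<in> {0..t}"
    have "(g has_real_derivative
        exp (a * x) * a * (a * F x - m) + exp (a * x) * (a * (- a * F x + G x))) (at x within {0..t})"
      unfolding g_def by (auto intro!: derivative_eq_intros deriv[OF x])
    then show "(g has_real_derivative a * exp (a * x) * (G x - m)) (at x within {0..t})"
      by (simp add: algebra_simps)
    show "a * exp (a * x) * (G x - m) \<le> 0"
      using \<open>0 < a\<close> bound[OF x] by (simp add: mult_nonneg_nonpos)
  qed
  then have "exp (a * t) * (a * F t - m) \<le> - m"
    using \<open>F 0 = 0\<close> by (simp add: g_def)
  then have "a * F t - m \<le> - m * exp (- a * t)"
    by (simp add: exp_minus field_simps)
  then show ?thesis
    by (simp add: algebra_simps)
qed

lemma linear_ode_abs_bound:
  fixes F G :: "real \<Rightarrow> real"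
  assumes "0 \<le> t" "0 < a" "F 0 = 0"
    and deriv: "\<And>x. x \<in> {0..t} \<Longrightarrow> (F has_real_derivative - a * F x + G x) (at x within {0..t})"
    and bound: "\<And>x. x \<in> {0..t} \<Longrightarrow> \<bar>G x\<bar> \<le> m"
  shows "\<bar>a * F t\<bar> \<le> m * (1 - exp (- a * t))"
proof -
  have "a * F t \<le> m * (1 - exp (- a * t))"
    by (rule linear_ode_comparison[OF assms(1-3) deriv]) (use bound abs_le_D1 in auto)
  moreover have "a * - F t \<le> m * (1 - exp (- a * t))"
  proof (rule linear_ode_comparison[where G = "\<lambda>x. - G x"])
    fix x assume "x \<in> {0..t}"
    show "((\<lambda>x. - F x) has_real_derivative - a * - F x + - G x) (at x within {0..t})"
      using DERIV_minus[OF deriv[OF \<open>x \<in> {0..t}\<close>]] by simp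
    show "- G x \<le> m" using bound[OF \<open>x \<in> {0..t}\<close>] by simp
  qed (use assms in auto)
  ultimately show ?thesis by linarith
qed

lemma integral_sliding_variable_bound:
  fixes Z W D :: "real \<Rightarrow> real"
  assumes "0 \<le> t" "0 < l" "0 < k" "0 < \<delta>" "Z 0 = 0" "W 0 = 0"
    and W_deriv: "\<And>x. x \<in> {0..t} \<Longrightarrow> (W has_real_derivative Z x) (at x within {0..t})"
    and Z_deriv: "\<And>x. x \<in> {0..t} \<Longrightarrow>
      (Z has_real_derivative D x - l * Z x - k * (Z x + l * W x)) (at x within {0..t})"
    and D_bound: "\<And>x. x \<in> {0..t} \<Longrightarrow> \<bar>D x\<bar> \<le> \<delta>"
  shows "\<bar>Z t\<bar> < 2 * \<delta> / k"
proof -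
  define S where "S u = Z u + l * W u" for u
  have S_deriv: "(S has_real_derivative - k * S x + D x) (at x within {0..u})"
    if "x \<in> {0..u}" "u \<le> t" for x u
  proof -
    have sub: "x \<in> {0..t}" "{0..u} \<subseteq> {0..t}" using that by auto
    note dZ = has_field_derivative_subset[OF Z_deriv[OF sub(1)] sub(2)]
    note dW = has_field_derivative_subset[OF W_deriv[OF sub(1)] sub(2)]
    have "(S has_real_derivative (D x - l * Z x - k * (Z x + l * W x)) + l * Z x) (at x within {0..u})"
      unfolding S_def by (rule DERIV_add[OF dZ DERIV_cmult[OF dW]])
    then show ?thesis by (simp add: S_def algebra_simps)
  qed
  have S_bound: "\<bar>S x\<bar> \<le> \<delta> / k" if x: "x \<in> {0..t}" for x
  proof -
    have "\<bar>k * S x\<bar> \<le> \<delta> * (1 - exp (- k * x))"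
    proof (rule linear_ode_abs_bound[where G = D])
      fix y assume "y \<in> {0..x}"
      then show "(S has_real_derivative - k * S y + D y) (at y within {0..x})"
        using S_deriv x by auto
    qed (use x assms D_bound in \<open>auto simp: S_def\<close>)
    also have "\<dots> \<le> \<delta>" using \<open>0 < \<delta>\<close> by simp
    finally show ?thesis using \<open>0 < k\<close> by (simp add: abs_mult field_simps)
  qed
  have "\<bar>l * W t\<bar> \<le> \<delta> / k * (1 - exp (- l * t))"
  proof (rule linear_ode_abs_bound[where G = S])
    fix x assume "x \<in> {0..t}"
    then show "(W has_real_derivative - l * W x + S x) (at x within {0..t})"
      using W_deriv by (simp add: S_def)
  qed (use assms S_bound in auto)
  also have "\<dots> < \<delta> / k * 1" using assms by (intro mult_strict_left_mono) auto
  finally have "\<bar>l * W t\<bar> < \<delta> / k" by simp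
  moreover have "\<bar>Z t + l * W t\<bar> \<le> \<delta> / k" using S_bound[of t] assms(1) by (simp add: S_def)
  ultimately show ?thesis by linarith
qed

lemma diag_integral_error_bound:
  fixes z \<Delta> :: "real \<Rightarrow> real^'n" and \<Lambda> K :: "real^'n^'n"
  assumes \<Lambda>: "pos_diag \<Lambda>" and K: "pos_diag K" and "0 < \<delta>" "z 0 = 0" "0 \<le> t"
    and z_deriv: "\<And>x. 0 \<le> x \<Longrightarrow> (z has_vector_derivative
      \<Delta> x - \<Lambda> *v z x - K *v (z x + \<Lambda> *v integral {0..x} z)) (at x within {0..})"
    and \<Delta>_bound: "\<And>x. 0 \<le> x \<Longrightarrow> norm (\<Delta> x) \<le> \<delta>"
  shows "\<bar>z t $ i\<bar> < 2 * \<delta> / K $ i $ i"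
proof -
  have diag: "\<forall>i j. i \<noteq> j \<longrightarrow> \<Lambda> $ i $ j = 0" "\<forall>i j. i \<noteq> j \<longrightarrow> K $ i $ j = 0"
    and pos: "0 < \<Lambda> $ i $ i" "0 < K $ i $ i"
    using \<Lambda> K unfolding pos_diag_def by auto
  have z_deriv_Icc: "(z has_vector_derivative
      \<Delta> x - \<Lambda> *v z x - K *v (z x + \<Lambda> *v integral {0..x} z)) (at x within {0..t})"
    if "x \<in> {0..t}" for x
    using z_deriv[of x] that by (auto intro: has_vector_derivative_within_subset)
  then have "continuous_on {0..t} z"
    by (meson continuous_on_eq_continuous_within has_vector_derivative_continuous)
  then have W_deriv: "((\<lambda>u. integral {0..u} z) has_vector_derivative z x) (at x within {0..t})"
    if "x \<in> {0..t}" for x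
    using integral_has_vector_derivative that by blast
  show ?thesis
  proof (rule integral_sliding_variable_bound[where Z = "\<lambda>u. z u $ i"
        and W = "\<lambda>u. integral {0..u} z $ i" and D = "\<lambda>u. \<Delta> u $ i"])
    fix x assume x: "x \<in> {0..t}"
    show "((\<lambda>u. integral {0..u} z $ i) has_real_derivative z x $ i) (at x within {0..t})"
      by (rule has_vector_derivative_vec_nth[OF W_deriv[OF x]])
    show "((\<lambda>u. z u $ i) has_real_derivative \<Delta> x $ i - \<Lambda> $ i $ i * z x $ i
        - K $ i $ i * (z x $ i + \<Lambda> $ i $ i * integral {0..x} z $ i)) (at x within {0..t})"
      using has_vector_derivative_vec_nth[OF z_deriv_Icc[OF x], of i]
      by (simp add: diag_matrix_vector_mult_nth[OF diag(1)] diag_matrix_vector_mult_nth[OF diag(2)])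
    show "\<bar>\<Delta> x $ i\<bar> \<le> \<delta>"
      using component_le_norm_cart[of "\<Delta> x" i] \<Delta>_bound[of x] x by auto
  qed (use assms pos in auto)
qed

lemma preset_trajectory_differentiable:
  fixes \<beta> c e0 :: "real^'n" and l :: real
  shows "(\<lambda>t. \<chi> \<nu>. \<beta> $ \<nu> / c $ \<nu> * (1 - exp (- c $ \<nu> * t)) * exp (- l * t) + e0 $ \<nu> * exp (- l * t))
    differentiable (at t)"
  by (rule differentiableI_vector, rule has_vector_derivative_vec_lambda) (rule derivative_eq_intros refl)+

lemma preset_trajectory_envelope:
  fixes \<beta> c e0 \<zeta> \<delta> \<rho>0 \<rho>inf l t :: real
  assumes "0 \<le> t" "0 \<le> l" "0 < c" "\<bar>\<zeta>\<bar> < \<delta>" "\<delta> < \<rho>inf" "\<delta> < \<rho>0 - \<bar>e0\<bar>"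
    and c_large: "\<bar>\<beta>\<bar> / (\<rho>0 - \<delta> - \<bar>e0\<bar>) < c"
  shows "\<bar>\<zeta> + (\<beta> / c * (1 - exp (- c * t)) * exp (- l * t) + e0 * exp (- l * t))\<bar>
    < (\<rho>0 - \<rho>inf) * exp (- l * t) + \<rho>inf"
proof -
  define x where "x = exp (- l * t)"
  define q where "q = 1 - exp (- c * t)"
  have x: "0 < x" "x \<le> 1" and q: "0 \<le> q" "q \<le> 1"
    using assms(1-3) by (auto simp: x_def q_def)
  have "\<bar>\<beta>\<bar> < c * (\<rho>0 - \<delta> - \<bar>e0\<bar>)"
    using c_large assms(6) by (simp add: pos_divide_less_eq mult.commute)
  then have "\<bar>\<beta>\<bar> / c < \<rho>0 - \<delta> - \<bar>e0\<bar>"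
    using assms(3) by (simp add: pos_divide_less_eq mult.commute)
  moreover have "\<bar>\<beta> / c * q\<bar> \<le> \<bar>\<beta>\<bar> / c"
    using q assms(3) by (simp add: abs_mult divide_right_mono mult_left_le)
  ultimately have A: "(\<bar>\<beta> / c * q\<bar> + \<bar>e0\<bar>) * x \<le> (\<rho>0 - \<delta>) * x"
    using x by (intro mult_right_mono) auto
  have B: "\<delta> * (1 - x) \<le> \<rho>inf * (1 - x)"
    using x assms(5) by (intro mult_right_mono) auto
  have C: "\<bar>\<zeta> + (\<beta> / c * q * x + e0 * x)\<bar> \<le> \<bar>\<zeta>\<bar> + (\<bar>\<beta> / c * q\<bar> + \<bar>e0\<bar>) * x"
    using x abs_triangle_ineq[of \<zeta> "\<beta> / c * q * x + e0 * x"]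
      abs_triangle_ineq[of "\<beta> / c * q * x" "e0 * x"]
    by (simp add: abs_mult distrib_right)
  have "\<bar>\<zeta> + (\<beta> / c * q * x + e0 * x)\<bar> < (\<rho>0 - \<rho>inf) * x + \<rho>inf"
    using A B C assms(4) unfolding distrib_right left_diff_distrib right_diff_distrib mult_1_right
    by linarith
  then show ?thesis unfolding x_def q_def .
qed

theorem theorem1:
  fixes pO vO pE vE pd \<Delta> alpha z s :: "real \<Rightarrow> real^3"
    and Lam K :: "real^3^3"
    and \<delta>E lE \<delta>z :: real
    and rho0 rhoinf b c :: "real^3"
    and rho :: "3 \<Rightarrow> real \<Rightarrow> real"
  assumes pO_deriv: "\<forall>t\<ge>0. (pO has_vector_derivative vO t) (at t within {0..})"
    and vO_cont: "continuous_on {0..} vO"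
    and pE_deriv: "\<forall>t\<ge>0. (pE has_vector_derivative vE t) (at t within {0..})"
    and pE_dyn: "\<forall>t\<ge>0. vE t = pd t + \<Delta> t"
    and \<delta>E_pos: "\<delta>E > 0"
    and \<Delta>_bound: "\<forall>t\<ge>0. norm (\<Delta> t) \<le> \<delta>E"
    and Lam_diag: "pos_diag Lam"
    and K_diag: "pos_diag K"
    and \<delta>z_def: "\<delta>z = (lambda_min Lam + lambda_max Lam) * \<delta>E / (lambda_min Lam * lambda_min K)"
    and lE_pos: "lE > 0"
    and rhoinf_pos: "\<forall>\<nu>. rhoinf $ \<nu> > 0"
    and rho0_gt: "\<forall>\<nu>. rho0 $ \<nu> > \<bar>(pE 0 - pO 0) $ \<nu>\<bar>"
    and rho_def: "\<forall>\<nu> t. rho \<nu> t = (rho0 $ \<nu> - rhoinf $ \<nu>) * exp (- lE * t) + rhoinf $ \<nu>"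
    and K_choice: "\<forall>\<nu>. \<delta>z < min (rhoinf $ \<nu>) (rho0 $ \<nu> - \<bar>(pE 0 - pO 0) $ \<nu>\<bar>)"
    and b_def: "b = lE *\<^sub>R (pE 0 - pO 0) + (vE 0 - vO 0)"
    and c_choice: "\<forall>\<nu>. c $ \<nu> > 0 \<and>
        c $ \<nu> > \<bar>b $ \<nu>\<bar> / (rho0 $ \<nu> - \<delta>z - \<bar>(pE 0 - pO 0) $ \<nu>\<bar>)"
    and alpha_def: "alpha = (\<lambda>t. \<chi> \<nu>. b $ \<nu> / c $ \<nu> * (1 - exp (- c $ \<nu> * t)) * exp (- lE * t)
                                   + (pE 0 - pO 0) $ \<nu> * exp (- lE * t))"
    and z_def: "z = (\<lambda>t. (pE t - pO t) - alpha t)"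
    and s_def: "s = (\<lambda>t. z t + Lam *v integral {0..t} z)"
    and control: "\<forall>t\<ge>0. pd t = vO t + vector_derivative alpha (at t) - Lam *v z t - K *v s t"
  shows "bounded ((\<lambda>t. pE t - pO t) ` {0..}) \<and>
         (\<forall>t\<ge>0. \<forall>\<nu>. \<bar>(pE t - pO t) $ \<nu>\<bar> < rho \<nu> t)"
proof -
  have alpha_deriv: "(alpha has_vector_derivative vector_derivative alpha (at t)) (at t)" for t
    using preset_trajectory_differentiable unfolding alpha_def vector_derivative_works .
  have z_deriv: "(z has_vector_derivative \<Delta> t - Lam *v z t - K *v (z t + Lam *v integral {0..t} z))
      (at t within {0..})" if "0 \<le> t" for t
  proof -
    have "(z has_vector_derivative vE t - vO t - vector_derivative alpha (at t)) (at t within {0..})"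
      unfolding z_def using pE_deriv pO_deriv that
      by (intro has_vector_derivative_diff has_vector_derivative_at_within[OF alpha_deriv]) auto
    then show ?thesis using pE_dyn control that by (simp add: s_def algebra_simps)
  qed
  have z_bound: "\<bar>z t $ \<nu>\<bar> < \<delta>z" if "0 \<le> t" for t \<nu>
  proof -
    have "z 0 = 0" by (simp add: z_def alpha_def vec_eq_iff)
    then have "\<bar>z t $ \<nu>\<bar> < 2 * \<delta>E / K $ \<nu> $ \<nu>"
      using diag_integral_error_bound[OF Lam_diag K_diag \<delta>E_pos _ that z_deriv] \<Delta>_bound by blast
    also have "\<dots> \<le> \<delta>z"
      unfolding \<delta>z_def using twice_div_diag_le_eigenvalue_quotient[OF Lam_diag K_diag] \<delta>E_pos by simp
    finally show ?thesis .
  qed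
  have envelope: "\<bar>(pE t - pO t) $ \<nu>\<bar> < rho \<nu> t" if "0 \<le> t" for t \<nu>
  proof -
    have "\<bar>z t $ \<nu> + alpha t $ \<nu>\<bar> < rho \<nu> t"
      unfolding rho_def[rule_format] alpha_def vec_lambda_beta
      by (rule preset_trajectory_envelope[OF that less_imp_le[OF lE_pos]])
        (use z_bound[OF that] K_choice[rule_format, of \<nu>] c_choice[rule_format, of \<nu>] in auto)
    then show ?thesis by (simp add: z_def)
  qed
  have "bounded ((\<lambda>t. pE t - pO t) ` {0..})"
  proof (rule bounded_image_if_abs_components_le)
    fix t :: real and \<nu> :: 3 assume "t \<in> {0..}"
    then show "\<bar>(pE t - pO t) $ \<nu>\<bar> \<le> \<bar>rho0 $ \<nu> - rhoinf $ \<nu>\<bar> + rhoinf $ \<nu>"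
      using envelope[of t \<nu>]
        mult_exp_decay_le_abs[OF less_imp_le[OF lE_pos], where a = "rho0 $ \<nu> - rhoinf $ \<nu>" and t = t]
      unfolding rho_def[rule_format] by simp
  qed
  with envelope show ?thesis by blast
qed

end
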